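(* Let $G:\mathcal P(\mathbb T^d)\to\mathbb R$ and define $\hat G:M\to\mathbb R$ by $\hat G(\psi)=G(\pi_\sharp\psi_\sharp\mathcal L^d)$. Suppose $G$ is strongly differentiable at $\tilde\mu\in\mathcal P(\mathbb T^d)$, let $\mu\in\mathcal P_2(\mathbb R^d)$ satisfy $\pi_\sharp\mu=\tilde\mu$, and let $\psi\in M$ satisfy $\psi_\sharp\mathcal L^d=\mu$. Then $\hat G$ is (Fréchet) differentiable at $\psi\circ h+z$ for every $(h,z)\in H\times L^2_{\mathbb Z}$, and $$D\hat G(\psi\circ h+z)=D\hat G(\psi)\circ h.$$
   Context: $\mathbb T^d=\mathbb R^d/\mathbb Z^d$, $\pi:\mathbb R^d\to\mathbb T^d$ the projection. $M=L^2([0,1)^d,\mathbb R^d)$, $\mathcal L^d$ Lebesgue measure on $[0,1)^d$; $D$ is the gradient on $M$ (an element of $M$ via the $L^2$ inner product). $H$ is the group of bi-measurable bijections of $[0,1)^d$ preserving $\mathcal L^d$; $L^2_{\mathbb Z}=L^2([0,1)^d,\mathbb Z^d)$. $\mathcal P(\mathbb T^d)$: Borel probability measures on $\mathbb T^d$; $\mathcal P_2(\mathbb R^d)$: those on $\mathbb R^d$ with finite second moment. Let $\alpha(x,v)=x+v$. For $\tilde\mu,\tilde\nu\in\mathcal P(\mathbb T^d)$, $\Psi(\tilde\mu,\tilde\nu)$ is the set of probability measures $\gamma$ on $\mathbb T^d\times\mathbb R^d$ with finite second moment in $v$, first marginal $\tilde\mu$ and $\alpha_\sharp\gamma=\tilde\nu$.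 $G$ is strongly differentiable at $\tilde\mu$ if there are $\xi\in L^2_{\tilde\mu}(\mathbb T^d,\mathbb R^d)$ and $k>0$ with $\big|G(\tilde\nu)-G(\tilde\mu)-\int\langle\xi(x),v\rangle d\gamma(x,v)\big|\le k\int|v|^2d\gamma(x,v)$ for all $\tilde\nu$ and all $\gamma\in\Psi(\tilde\mu,\tilde\nu)$. *)

theory Defs
  imports "HOL-Probability.Probability"
begin

definition unit_cube :: "(real ^ 'd) set" where
  "unit_cube = {x. \<forall>i. 0 \<le> x $ i \<and> x $ i < 1}"

definition Leb_cube :: "(real ^ 'd) measure" where
  "Leb_cube = lebesgue_on unit_cube"

text \<open>Projection pi : R^d -> T^d, the torus being modelled by its fundamental domain [0,1)^d.\<close>
definition tor_proj :: "real ^ 'd \<Rightarrow> real ^ 'd" where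
  "tor_proj x = (\<chi> i. frac (x $ i))"

text \<open>P(T^d): Borel probability measures on R^d concentrated on [0,1)^d (i.e. on the torus).\<close>
definition prob_torus :: "(real ^ 'd) measure set" where
  "prob_torus = {m. prob_space m \<and> sets m = sets borel \<and> emeasure m (UNIV - unit_cube) = 0}"

definition prob2 :: "(real ^ 'd) measure set" where
  "prob2 = {m. prob_space m \<and> sets m = sets borel \<and> integrable m (\<lambda>x. (norm x)\<^sup>2)}"

text \<open>M = L^2([0,1)^d, R^d) (represented by functions).\<close>
definition L2M :: "(real ^ 'd \<Rightarrow> real ^ 'd) set" where
  "L2M = {f. f \<in> borel_measurable Leb_cube \<and> integrable Leb_cube (\<lambda>x. (norm (f x))\<^sup>2)}"

definition L2_inner :: "(real ^ 'd \<Rightarrow> real ^ 'd) \<Rightarrow> (real ^ 'd \<Rightarrow> real ^ 'd) \<Rightarrow> real" where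
  "L2_inner f g = (\<integral>x. f x \<bullet> g x \<partial>Leb_cube)"

definition L2_norm :: "(real ^ 'd \<Rightarrow> real ^ 'd) \<Rightarrow> real" where
  "L2_norm f = sqrt (\<integral>x. (norm (f x))\<^sup>2 \<partial>Leb_cube)"

definition L2Z :: "(real ^ 'd \<Rightarrow> real ^ 'd) set" where
  "L2Z = {z. z \<in> L2M \<and> (\<forall>x\<in>unit_cube. \<forall>i. z x $ i \<in> \<int>)}"

definition meas_pres_bij :: "(real ^ 'd \<Rightarrow> real ^ 'd) set" where
  "meas_pres_bij = {h. bij_betw h unit_cube unit_cube
      \<and> h \<in> measurable Leb_cube Leb_cube
      \<and> inv_into unit_cube h \<in> measurable Leb_cube Leb_cube
      \<and> distr Leb_cube Leb_cube h = Leb_cube}"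

definition Ghat :: "((real ^ 'd) measure \<Rightarrow> real) \<Rightarrow> (real ^ 'd \<Rightarrow> real ^ 'd) \<Rightarrow> real" where
  "Ghat G \<psi> = G (distr (distr Leb_cube borel \<psi>) borel tor_proj)"

definition plans :: "(real ^ 'd) measure \<Rightarrow> (real ^ 'd) measure \<Rightarrow> ((real ^ 'd) \<times> (real ^ 'd)) measure set" where
  "plans mu nu = {\<gamma>. prob_space \<gamma> \<and> sets \<gamma> = sets (borel \<Otimes>\<^sub>M borel)
      \<and> integrable \<gamma> (\<lambda>(x, v). (norm v)\<^sup>2)
      \<and> distr \<gamma> borel fst = mu
      \<and> distr \<gamma> borel (\<lambda>(x, v). tor_proj (x + v)) = nu}"

definition strongly_diff :: "((real ^ 'd) measure \<Rightarrow> real) \<Rightarrow> (real ^ 'd) measure \<Rightarrow> bool" where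
  "strongly_diff G mu \<longleftrightarrow> (\<exists>\<xi> k. \<xi> \<in> borel_measurable mu \<and> integrable mu (\<lambda>x. (norm (\<xi> x))\<^sup>2)
      \<and> k > 0 \<and> (\<forall>nu \<in> prob_torus. \<forall>\<gamma> \<in> plans mu nu.
          \<bar>G nu - G mu - (\<integral>(x, v). \<xi> x \<bullet> v \<partial>\<gamma>)\<bar> \<le> k * (\<integral>(x, v). (norm v)\<^sup>2 \<partial>\<gamma>)))"

definition has_L2_gradient :: "((real ^ 'd \<Rightarrow> real ^ 'd) \<Rightarrow> real) \<Rightarrow> (real ^ 'd \<Rightarrow> real ^ 'd) \<Rightarrow> (real ^ 'd \<Rightarrow> real ^ 'd) \<Rightarrow> bool" where
  "has_L2_gradient F \<psi> \<Phi> \<longleftrightarrow> \<Phi> \<in> L2M \<and>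
     (\<forall>\<epsilon>>0. \<exists>\<delta>>0. \<forall>\<phi>\<in>L2M. L2_norm \<phi> < \<delta> \<longrightarrow>
        \<bar>F (\<lambda>x. \<psi> x + \<phi> x) - F \<psi> - L2_inner \<Phi> \<phi>\<bar> \<le> \<epsilon> * L2_norm \<phi>)"

end

theory Submission
  imports Defs
begin

text \<open>
  \<open>Ghat G \<psi>\<close> only depends on the law \<open>\<mu>\<^sub>\<psi>\<close> of \<open>tor_proj \<circ> \<psi>\<close> under Lebesgue measure
  on the cube. For a perturbation \<open>\<phi>\<close>, the law of \<open>x \<mapsto> (tor_proj (\<psi> x), \<phi> x)\<close> is a plan
  from \<open>\<mu>\<^sub>\<psi>\<close> to \<open>\<mu>\<^sub>\<psi>\<^sub>+\<^sub>\<phi>\<close> with second moment \<open>\<parallel>\<phi>\<parallel>\<^sup>2\<close>, so strong differentiability of \<open>G\<close>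
  yields a first-order expansion of \<open>Ghat G\<close> at \<open>\<psi>\<close> with gradient \<open>\<xi> \<circ> tor_proj \<circ> \<psi>\<close> and
  quadratic remainder. Replacing \<open>\<psi>\<close> by \<open>\<psi> \<circ> h + z\<close> does not change \<open>\<mu>\<^sub>\<psi>\<close>: the integer
  shift is killed by the projection and \<open>h\<close> preserves Lebesgue measure. Hence the expansion at
  \<open>\<psi> \<circ> h + z\<close> in direction \<open>\<phi>\<close> is the expansion at \<open>\<psi>\<close> in direction \<open>\<phi> \<circ> h\<^sup>-\<^sup>1\<close>, which
  transports every gradient \<open>\<Phi>\<close> at \<open>\<psi>\<close> to \<open>\<Phi> \<circ> h\<close>.
\<close>

lemma unit_cube_borel [measurable]: "unit_cube \<in> sets borel"
  unfolding unit_cube_def by measurable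

lemma space_Leb_cube [simp]: "space Leb_cube = unit_cube"
  by (simp add: Leb_cube_def)

lemma prob_space_Leb_cube: "prob_space (Leb_cube :: (real ^ 'd) measure)"
proof (rule prob_spaceI)
  have cube_between: "box 0 (vec 1) \<subseteq> (unit_cube :: (real ^ 'd) set)"
    "unit_cube \<subseteq> cbox (0 :: real ^ 'd) (vec 1)"
    by (auto simp: unit_cube_def mem_box_cart) (metis less_imp_le)+
  have "\<forall>b \<in> (Basis :: (real ^ 'd) set). (vec 1 - 0) \<bullet> b = (1 :: real)"
    by (auto simp: Basis_vec_def inner_axis)
  then have box: "emeasure lborel (box 0 (vec 1 :: real ^ 'd)) = 1"
    and cbox: "emeasure lborel (cbox 0 (vec 1 :: real ^ 'd)) = 1"
    by (simp_all add: emeasure_lborel_box_eq emeasure_lborel_cbox_eq prod.neutral)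
  have "emeasure lborel (unit_cube :: (real ^ 'd) set) = 1"
    using emeasure_mono[OF cube_between(1), of lborel] emeasure_mono[OF cube_between(2), of lborel]
    unfolding box cbox by (simp add: antisym)
  then show "emeasure (Leb_cube :: (real ^ 'd) measure) (space Leb_cube) = 1"
    unfolding Leb_cube_def by (subst emeasure_restrict_space) (auto simp: main_part_sets)
qed

lemma L2M_borel_measurable: "f \<in> L2M \<Longrightarrow> f \<in> borel_measurable Leb_cube"
  by (simp add: L2M_def)

lemma L2_norm_nonneg: "L2_norm f \<ge> 0"
  by (simp add: L2_norm_def)

lemma tor_proj_borel_measurable [measurable]: "tor_proj \<in> borel_measurable borel"
proof -
  have "(\<lambda>x. tor_proj x \<bullet> i) \<in> borel_measurable borel" if i: "i \<in> Basis" for i :: "real ^ 'd"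
  proof -
    obtain j where j: "i = axis j 1"
      using axis_inverse[OF i] by auto
    have "(\<lambda>x :: real ^ 'd. frac (x $ j)) \<in> borel_measurable borel"
      unfolding frac_def by measurable
    then show ?thesis
      by (simp add: j tor_proj_def cart_eq_inner_axis[symmetric] inner_axis)
  qed
  then show ?thesis
    by (subst borel_measurable_euclidean_space) auto
qed

lemma tor_proj_in_unit_cube: "tor_proj x \<in> unit_cube"
  by (simp add: tor_proj_def unit_cube_def frac_lt_1)

lemma tor_proj_add_tor_proj: "tor_proj (tor_proj x + y) = tor_proj (x + y)"
proof -
  have "frac (frac a + b) = frac (a + b)" for a b :: real
  proof -
    have "frac a + b = (a + b) + of_int (- \<lfloor>a\<rfloor>)"
      by (simp add: frac_def)
    then show ?thesis
      by (metis frac_add_of_int_right)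
  qed
  then show ?thesis
    by (simp add: tor_proj_def)
qed

lemma tor_proj_add_integer: "(\<And>i. w $ i \<in> \<int>) \<Longrightarrow> tor_proj (y + w) = tor_proj y"
  by (simp add: tor_proj_def frac_add_int_right)

lemma distr_tor_proj_in_prob_torus:
  assumes "prob_space M" and "f \<in> borel_measurable M"
  shows "distr M borel (\<lambda>x. tor_proj (f x)) \<in> prob_torus"
proof -
  have "emeasure (distr M borel (\<lambda>x. tor_proj (f x))) (UNIV - unit_cube)
      = emeasure M ((\<lambda>x. tor_proj (f x)) -` (UNIV - unit_cube) \<inter> space M)"
    using assms(2) by (intro emeasure_distr) auto
  also have "(\<lambda>x. tor_proj (f x)) -` (UNIV - unit_cube) = {}"
    using tor_proj_in_unit_cube by blast
  finally show ?thesis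
    using assms by (simp add: prob_torus_def prob_space.prob_space_distr)
qed

lemma distr_comp_measure_preserving:
  assumes "h \<in> measurable M M" and "distr M M h = M" and "f \<in> measurable M N"
  shows "distr M N (\<lambda>x. f (h x)) = distr M N f"
  using distr_distr[OF assms(3,1)] assms(2) by (simp add: comp_def)

lemma
  fixes f :: "'a \<Rightarrow> real"
  assumes "h \<in> measurable M M" and "distr M M h = M" and "f \<in> borel_measurable M"
  shows integral_comp_measure_preserving: "(\<integral>x. f (h x) \<partial>M) = (\<integral>x. f x \<partial>M)"
    and integrable_comp_measure_preserving: "integrable M (\<lambda>x. f (h x)) \<longleftrightarrow> integrable M f"
  using integral_distr[OF assms(1,3)] integrable_distr_eq[OF assms(1,3)] assms(2) by simp_all

lemma meas_pres_bijD:
  assumes "h \<in> meas_pres_bij"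
  shows "h \<in> measurable Leb_cube Leb_cube" and "distr Leb_cube Leb_cube h = Leb_cube"
    and "bij_betw h unit_cube unit_cube"
  using assms by (auto simp: meas_pres_bij_def)

lemma inv_into_meas_pres_bij:
  assumes "h \<in> meas_pres_bij"
  shows "inv_into unit_cube h \<in> meas_pres_bij"
proof -
  define g where "g = inv_into unit_cube h"
  have bij: "bij_betw h unit_cube unit_cube" and hm: "h \<in> measurable Leb_cube Leb_cube"
    and gm: "g \<in> measurable Leb_cube Leb_cube" and hd: "distr Leb_cube Leb_cube h = Leb_cube"
    using assms by (auto simp: meas_pres_bij_def g_def)
  have gh: "g (h x) = x" and ggh: "inv_into unit_cube g x = h x" if "x \<in> unit_cube" for x
    using that bij by (simp_all add: g_def bij_betw_inv_into_left inv_into_inv_into_eq)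
  have "inv_into unit_cube g \<in> measurable Leb_cube Leb_cube"
    using hm by (rule measurable_cong[THEN iffD1, rotated]) (simp add: ggh)
  moreover have "distr Leb_cube Leb_cube g = Leb_cube"
  proof -
    have "distr Leb_cube Leb_cube g = distr Leb_cube Leb_cube (\<lambda>x. g (h x))"
      using gm hm hd by (simp add: distr_comp_measure_preserving)
    also have "\<dots> = distr Leb_cube Leb_cube (\<lambda>x. x)"
      by (rule distr_cong) (simp_all add: gh)
    finally show ?thesis
      by (simp add: distr_id)
  qed
  ultimately show ?thesis
    using bij gm by (simp add: meas_pres_bij_def g_def bij_betw_inv_into)
qed

lemma
  assumes "h \<in> meas_pres_bij" and "f \<in> L2M"
  shows L2M_comp_meas_pres_bij: "(\<lambda>x. f (h x)) \<in> L2M"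
    and L2_norm_comp_meas_pres_bij: "L2_norm (\<lambda>x. f (h x)) = L2_norm f"
proof -
  note h = meas_pres_bijD[OF assms(1)]
  have f: "f \<in> borel_measurable Leb_cube" "integrable Leb_cube (\<lambda>x. (norm (f x))\<^sup>2)"
    using assms(2) by (auto simp: L2M_def)
  then have "(\<lambda>x. (norm (f x))\<^sup>2) \<in> borel_measurable Leb_cube"
    by measurable
  note sq = integral_comp_measure_preserving[OF h(1,2) this]
    integrable_comp_measure_preserving[OF h(1,2) this]
  show "(\<lambda>x. f (h x)) \<in> L2M"
    using measurable_compose[OF h(1) f(1)] sq(2) f(2) by (simp add: L2M_def)
  show "L2_norm (\<lambda>x. f (h x)) = L2_norm f"
    using sq(1) by (simp add: L2_norm_def)
qed

lemma L2_inner_comp_meas_pres_bij: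
  assumes "h \<in> meas_pres_bij"
    and "\<Phi> \<in> borel_measurable Leb_cube" and "\<phi> \<in> borel_measurable Leb_cube"
  shows "L2_inner (\<lambda>x. \<Phi> (h x)) \<phi> = L2_inner \<Phi> (\<lambda>x. \<phi> (inv_into unit_cube h x))"
proof -
  note h = meas_pres_bijD[OF assms(1)]
  define g where "g = inv_into unit_cube h"
  have gm: "g \<in> measurable Leb_cube Leb_cube"
    using inv_into_meas_pres_bij[OF assms(1)] by (simp add: meas_pres_bij_def g_def)
  have "(\<lambda>x. \<Phi> x \<bullet> \<phi> (g x)) \<in> borel_measurable Leb_cube"
    using assms(2,3) gm by measurable
  from integral_comp_measure_preserving[OF h(1,2) this]
  have "L2_inner \<Phi> (\<lambda>x. \<phi> (g x)) = (\<integral>x. \<Phi> (h x) \<bullet> \<phi> (g (h x)) \<partial>Leb_cube)"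
    by (simp add: L2_inner_def)
  also have "\<dots> = L2_inner (\<lambda>x. \<Phi> (h x)) \<phi>"
    unfolding L2_inner_def using h(3)
    by (intro Bochner_Integration.integral_cong) (simp_all add: g_def bij_betw_inv_into_left)
  finally show ?thesis
    by (simp add: g_def)
qed

lemma Ghat_eq_distr_tor_proj:
  "f \<in> borel_measurable Leb_cube \<Longrightarrow> Ghat G f = G (distr Leb_cube borel (\<lambda>x. tor_proj (f x)))"
  unfolding Ghat_def by (subst distr_distr) (auto simp: comp_def)

lemma Ghat_cong: "(\<And>x. x \<in> unit_cube \<Longrightarrow> f x = f' x) \<Longrightarrow> Ghat G f = Ghat G f'"
  unfolding Ghat_def by (rule arg_cong[where f = G], rule arg_cong2[where f = "\<lambda>m f. distr m borel f"],
    rule distr_cong) auto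

lemma Ghat_comp_meas_pres_bij_add_L2Z:
  assumes "h \<in> meas_pres_bij" and "z \<in> L2Z" and f: "f \<in> borel_measurable Leb_cube"
  shows "Ghat G (\<lambda>x. f (h x) + z x) = Ghat G f"
proof -
  note h = meas_pres_bijD[OF assms(1)]
  have z: "z \<in> borel_measurable Leb_cube" "\<And>x i. x \<in> unit_cube \<Longrightarrow> z x $ i \<in> \<int>"
    using assms(2) by (auto simp: L2Z_def L2M_def)
  have fh: "(\<lambda>x. f (h x)) \<in> borel_measurable Leb_cube"
    using measurable_compose[OF h(1) f] .
  have "Ghat G (\<lambda>x. f (h x) + z x) = G (distr Leb_cube borel (\<lambda>x. tor_proj (f (h x) + z x)))"
    using fh z(1) by (simp add: Ghat_eq_distr_tor_proj)
  also have "distr Leb_cube borel (\<lambda>x. tor_proj (f (h x) + z x))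
      = distr Leb_cube borel (\<lambda>x. tor_proj (f (h x)))"
    by (rule distr_cong) (simp_all add: z(2) tor_proj_add_integer)
  also have "\<dots> = distr Leb_cube borel (\<lambda>x. tor_proj (f x))"
    by (rule distr_comp_measure_preserving[OF h(1,2)]) (use f in measurable)
  finally show ?thesis
    using f by (simp add: Ghat_eq_distr_tor_proj)
qed

lemma has_L2_gradientI_quadratic_remainder:
  assumes "\<Phi> \<in> L2M" and "k > 0"
    and "\<And>\<phi>. \<phi> \<in> L2M \<Longrightarrow>
      \<bar>F (\<lambda>x. \<psi> x + \<phi> x) - F \<psi> - L2_inner \<Phi> \<phi>\<bar> \<le> k * (L2_norm \<phi>)\<^sup>2"
  shows "has_L2_gradient F \<psi> \<Phi>"
  unfolding has_L2_gradient_def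
proof (intro conjI allI impI assms(1))
  fix \<epsilon> :: real
  assume "\<epsilon> > 0"
  have "k * (L2_norm \<phi>)\<^sup>2 \<le> \<epsilon> * L2_norm \<phi>" if "L2_norm \<phi> < \<epsilon> / k" for \<phi>
  proof -
    have "k * L2_norm \<phi> \<le> \<epsilon>"
      using that \<open>k > 0\<close> by (simp add: field_simps)
    then show ?thesis
      using L2_norm_nonneg[of \<phi>] by (simp add: power2_eq_square mult_right_mono mult.assoc[symmetric])
  qed
  then show "\<exists>\<delta>>0. \<forall>\<phi>\<in>L2M. L2_norm \<phi> < \<delta> \<longrightarrow>
      \<bar>F (\<lambda>x. \<psi> x + \<phi> x) - F \<psi> - L2_inner \<Phi> \<phi>\<bar> \<le> \<epsilon> * L2_norm \<phi>"
    using assms(3) \<open>\<epsilon> > 0\<close> \<open>k > 0\<close> by (meson order_trans divide_pos_pos)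
qed

lemma
  fixes \<psi> \<phi> :: "real ^ 'd \<Rightarrow> real ^ 'd"
  defines "\<gamma> \<equiv> distr Leb_cube (borel \<Otimes>\<^sub>M borel) (\<lambda>x. (tor_proj (\<psi> x), \<phi> x))"
  assumes \<psi>: "\<psi> \<in> borel_measurable Leb_cube" and "\<phi> \<in> L2M"
  shows perturbation_plan: "\<gamma> \<in> plans (distr Leb_cube borel (\<lambda>x. tor_proj (\<psi> x)))
      (distr Leb_cube borel (\<lambda>x. tor_proj (\<psi> x + \<phi> x)))"
    and perturbation_plan_second_moment: "(\<integral>(x, v). (norm v)\<^sup>2 \<partial>\<gamma>) = (L2_norm \<phi>)\<^sup>2"
    and perturbation_plan_pairing: "\<xi> \<in> borel_measurable borel \<Longrightarrow>
      (\<integral>(x, v). \<xi> x \<bullet> v \<partial>\<gamma>) = L2_inner (\<lambda>x. \<xi> (tor_proj (\<psi> x))) \<phi>"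
proof -
  have \<phi>: "\<phi> \<in> borel_measurable Leb_cube" "integrable Leb_cube (\<lambda>x. (norm (\<phi> x))\<^sup>2)"
    using \<open>\<phi> \<in> L2M\<close> by (auto simp: L2M_def)
  have T: "(\<lambda>x. (tor_proj (\<psi> x), \<phi> x)) \<in> measurable Leb_cube (borel \<Otimes>\<^sub>M borel)"
    using \<psi> \<phi>(1) by measurable
  have \<alpha>: "distr \<gamma> borel (\<lambda>(x, v). tor_proj (x + v))
      = distr Leb_cube borel (\<lambda>x. tor_proj (\<psi> x + \<phi> x))"
    unfolding \<gamma>_def using T by (subst distr_distr) (auto simp: comp_def tor_proj_add_tor_proj)
  show "\<gamma> \<in> plans (distr Leb_cube borel (\<lambda>x. tor_proj (\<psi> x)))
      (distr Leb_cube borel (\<lambda>x. tor_proj (\<psi> x + \<phi> x)))"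
    unfolding plans_def using T \<phi>(2) \<alpha>
    by (auto simp: \<gamma>_def prob_space.prob_space_distr[OF prob_space_Leb_cube]
        integrable_distr_eq distr_distr comp_def)
  show "(\<integral>(x, v). (norm v)\<^sup>2 \<partial>\<gamma>) = (L2_norm \<phi>)\<^sup>2"
    unfolding \<gamma>_def L2_norm_def using T by (subst integral_distr) auto
  show "(\<integral>(x, v). \<xi> x \<bullet> v \<partial>\<gamma>) = L2_inner (\<lambda>x. \<xi> (tor_proj (\<psi> x))) \<phi>"
    if "\<xi> \<in> borel_measurable borel"
    unfolding \<gamma>_def L2_inner_def using T that by (subst integral_distr) auto
qed

lemma strongly_diff_imp_has_L2_gradient_Ghat:
  assumes sd: "strongly_diff G (distr Leb_cube borel (\<lambda>x. tor_proj (\<psi> x)))"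
    and \<psi>: "\<psi> \<in> borel_measurable Leb_cube"
  shows "\<exists>\<Phi>. has_L2_gradient (Ghat G) \<psi> \<Phi>"
proof -
  let ?\<mu> = "distr Leb_cube borel (\<lambda>x. tor_proj (\<psi> x))"
  obtain \<xi> k where \<xi>: "\<xi> \<in> borel_measurable ?\<mu>" "integrable ?\<mu> (\<lambda>x. (norm (\<xi> x))\<^sup>2)"
    and "k > 0" and expansion: "\<And>\<nu> \<gamma>. \<nu> \<in> prob_torus \<Longrightarrow> \<gamma> \<in> plans ?\<mu> \<nu> \<Longrightarrow>
      \<bar>G \<nu> - G ?\<mu> - (\<integral>(x, v). \<xi> x \<bullet> v \<partial>\<gamma>)\<bar> \<le> k * (\<integral>(x, v). (norm v)\<^sup>2 \<partial>\<gamma>)"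
    using sd unfolding strongly_diff_def by blast
  have \<xi>_borel: "\<xi> \<in> borel_measurable borel"
    using \<xi>(1) by (simp cong: measurable_cong_sets)
  define \<Phi> where "\<Phi> = (\<lambda>x. \<xi> (tor_proj (\<psi> x)))"
  have "\<Phi> \<in> L2M"
    using \<xi>(2) \<xi>_borel \<psi> by (simp add: L2M_def \<Phi>_def integrable_distr_eq)
  moreover have "\<bar>Ghat G (\<lambda>x. \<psi> x + \<phi> x) - Ghat G \<psi> - L2_inner \<Phi> \<phi>\<bar> \<le> k * (L2_norm \<phi>)\<^sup>2"
    if "\<phi> \<in> L2M" for \<phi>
  proof -
    have "distr Leb_cube borel (\<lambda>x. tor_proj (\<psi> x + \<phi> x)) \<in> prob_torus"
      using \<psi> L2M_borel_measurable[OF that]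
      by (intro distr_tor_proj_in_prob_torus prob_space_Leb_cube) measurable
    from expansion[OF this perturbation_plan[OF \<psi> that]] show ?thesis
      using \<psi> L2M_borel_measurable[OF that]
      by (simp add: perturbation_plan_second_moment[OF \<psi> that]
          perturbation_plan_pairing[OF \<psi> that \<xi>_borel] Ghat_eq_distr_tor_proj \<Phi>_def)
  qed
  ultimately show ?thesis
    using \<open>k > 0\<close> has_L2_gradientI_quadratic_remainder by blast
qed

lemma has_L2_gradient_Ghat_comp_meas_pres_bij_add_L2Z:
  assumes grad: "has_L2_gradient (Ghat G) \<psi> \<Phi>" and h: "h \<in> meas_pres_bij" and z: "z \<in> L2Z"
    and \<psi>: "\<psi> \<in> borel_measurable Leb_cube"
  shows "has_L2_gradient (Ghat G) (\<lambda>x. \<psi> (h x) + z x) (\<lambda>x. \<Phi> (h x))"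
  unfolding has_L2_gradient_def
proof (intro conjI allI impI)
  define g where "g = inv_into unit_cube h"
  have \<Phi>: "\<Phi> \<in> L2M"
    using grad by (simp add: has_L2_gradient_def)
  then show "(\<lambda>x. \<Phi> (h x)) \<in> L2M"
    using h by (rule L2M_comp_meas_pres_bij[rotated])
  fix \<epsilon> :: real
  assume "\<epsilon> > 0"
  then obtain \<delta> where "\<delta> > 0" and \<delta>: "\<And>\<phi>. \<phi> \<in> L2M \<Longrightarrow> L2_norm \<phi> < \<delta> \<Longrightarrow>
      \<bar>Ghat G (\<lambda>x. \<psi> x + \<phi> x) - Ghat G \<psi> - L2_inner \<Phi> \<phi>\<bar> \<le> \<epsilon> * L2_norm \<phi>"
    using grad unfolding has_L2_gradient_def by metis
  have "\<bar>Ghat G (\<lambda>x. \<psi> (h x) + z x + \<phi> x) - Ghat G (\<lambda>x. \<psi> (h x) + z x)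
      - L2_inner (\<lambda>x. \<Phi> (h x)) \<phi>\<bar> \<le> \<epsilon> * L2_norm \<phi>"
    if \<phi>: "\<phi> \<in> L2M" and "L2_norm \<phi> < \<delta>" for \<phi>
  proof -
    have \<phi>g: "(\<lambda>x. \<phi> (g x)) \<in> L2M" "L2_norm (\<lambda>x. \<phi> (g x)) = L2_norm \<phi>"
      using inv_into_meas_pres_bij[OF h] \<phi> unfolding g_def
      by (simp_all add: L2M_comp_meas_pres_bij L2_norm_comp_meas_pres_bij)
    have "Ghat G (\<lambda>x. \<psi> (h x) + z x + \<phi> x) = Ghat G (\<lambda>x. (\<psi> (h x) + \<phi> (g (h x))) + z x)"
      using meas_pres_bijD(3)[OF h] by (intro Ghat_cong) (simp add: g_def bij_betw_inv_into_left)
    also have "\<dots> = Ghat G (\<lambda>x. \<psi> x + \<phi> (g x))"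
      using h z \<psi> L2M_borel_measurable[OF \<phi>g(1)]
      by (intro Ghat_comp_meas_pres_bij_add_L2Z[where f = "\<lambda>x. \<psi> x + \<phi> (g x)"]) measurable
    finally show ?thesis
      using \<delta>[OF \<phi>g(1)] \<phi>g(2) \<open>L2_norm \<phi> < \<delta>\<close> h z \<psi> L2M_borel_measurable[OF \<Phi>]
        L2M_borel_measurable[OF \<phi>]
      by (simp add: Ghat_comp_meas_pres_bij_add_L2Z L2_inner_comp_meas_pres_bij g_def)
  qed
  then show "\<exists>\<delta>>0. \<forall>\<phi>\<in>L2M. L2_norm \<phi> < \<delta> \<longrightarrow>
      \<bar>Ghat G (\<lambda>x. \<psi> (h x) + z x + \<phi> x) - Ghat G (\<lambda>x. \<psi> (h x) + z x)
        - L2_inner (\<lambda>x. \<Phi> (h x)) \<phi>\<bar> \<le> \<epsilon> * L2_norm \<phi>"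
    using \<open>\<delta> > 0\<close> by blast
qed

theorem lemma1p4:
  fixes G :: "(real ^ 'd) measure \<Rightarrow> real"
    and mut mu :: "(real ^ 'd) measure"
    and \<psi> :: "real ^ 'd \<Rightarrow> real ^ 'd"
  assumes "mut \<in> prob_torus"
    and "strongly_diff G mut"
    and "mu \<in> prob2"
    and "distr mu borel tor_proj = mut"
    and "\<psi> \<in> L2M"
    and "distr Leb_cube borel \<psi> = mu"
  shows "(\<exists>\<Phi>. has_L2_gradient (Ghat G) \<psi> \<Phi>) \<and>
    (\<forall>h\<in>meas_pres_bij. \<forall>z\<in>L2Z. \<forall>\<Phi>. has_L2_gradient (Ghat G) \<psi> \<Phi> \<longrightarrow>
        has_L2_gradient (Ghat G) (\<lambda>x. \<psi> (h x) + z x) (\<lambda>x. \<Phi> (h x)))"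
proof -
  have \<psi>: "\<psi> \<in> borel_measurable Leb_cube"
    using assms(5) by (rule L2M_borel_measurable)
  have "mut = distr Leb_cube borel (\<lambda>x. tor_proj (\<psi> x))"
    using assms(4,6) \<psi> by (auto simp: distr_distr comp_def)
  then show ?thesis
    using strongly_diff_imp_has_L2_gradient_Ghat assms(2) \<psi>
      has_L2_gradient_Ghat_comp_meas_pres_bij_add_L2Z by blast
qed

end
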